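(* Let $f$ be the staircase function with descriptor $(h,o,\delta,\ell,L,V)$, and for $i\in[h]$ let $\Lambda_i$ be the schema partition of $\mathfrak B_\ell$ whose fixed positions are exactly the entries of rows $1,\dots,i$ of $L$ (so $\Lambda_i$ consists of $2^{oi}$ schemata, one of which is stage $i$ of $f$). Then for every $i\in[h]$, $$\sum_{\xi\in\Lambda_i,\ \xi\neq \text{stage } i} S(\xi) = -i\delta.$$
   Context: For a positive integer $n$, $[n]=\{1,\dots,n\}$ and $\mathfrak B_\ell$ is the set of binary strings of length $\ell$; $g_j$ denotes the $j$-th bit of $g$. For a $k$-tuple $x=(x_1,\dots,x_k)$ of integers in $[\ell]$ and $g\in\mathfrak B_\ell$, $\Xi_x(g)$ is the string $g_{x_1}g_{x_2}\cdots g_{x_k}$. For a matrix $M$, $M_{i:}$ is its $i$-th row (as a tuple). A schema is a set of the form $\{g\in\mathfrak B_\ell: g_j=c_j \text{ for all } j\in D\}$ for some $D\subseteq[\ell]$ and bits $c_j$; the schema partition with fixed positions $D$ is the set of all $2^{|D|}$ such schemata. A staircase function descriptor is a tuple $(h,o,\delta,\ell,L,V)$ where $h,o,\ell$ are positive integers with $ho\le \ell$, $\delta>0$ is real, $V$ is an $h\times o$ matrix of bits, and $L$ is an $h\times o$ matrix whose $ho$ entries are pairwise distinct integers in $[\ell]$. The staircase function $f$ with this descriptor is the stochastic function on $\mathfrak B_\ell$ computed as follows on input $g$: draw $x\sim\mathcal N(0,1)$ (independently at each evaluation); for $i=1,\dots,h$ in order: if $\Xi_{L_{i:}}(g)=V_{i1}\cdots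 V_{io}$ then set $x\leftarrow x+\delta$, otherwise set $x\leftarrow x-\delta/(2^o-1)$ and stop the loop; return $x$. Step $i$ of $f$ is the schema $\{g\in\mathfrak B_\ell:\Xi_{L_{i:}}(g)=V_{i1}\cdots V_{io}\}$; stage $i$ of $f$ is the schema of all $g$ lying in steps $1,\dots,i$ simultaneously. For a schema $\gamma\subseteq\mathfrak B_\ell$, $F_\gamma$ is the random variable giving the value of $f$ at a string drawn uniformly from $\gamma$. The fitness signal of $\gamma$ is $S(\gamma)=\mathbf E[F_\gamma]-\mathbf E[F_{\mathfrak B_\ell}]$. *)

theory Defs
  imports "HOL-Probability.Probability"
begin

text \<open>Binary strings of length l are bool lists of length l; bit j (1-based) of g is g ! (j-1).\<close>
definition bstrings :: "nat \<Rightarrow> bool list set" where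
  "bstrings l = {g. length g = l}"

definition bit :: "bool list \<Rightarrow> nat \<Rightarrow> bool" where
  "bit g j = g ! (j - 1)"

definition Xi :: "nat list \<Rightarrow> bool list \<Rightarrow> bool list" where
  "Xi x g = map (bit g) x"

definition row :: "nat \<Rightarrow> (nat \<Rightarrow> nat \<Rightarrow> 'a) \<Rightarrow> nat \<Rightarrow> 'a list" where
  "row oc M i = map (M i) [1..<oc+1]"

definition schema :: "nat \<Rightarrow> nat set \<Rightarrow> (nat \<Rightarrow> bool) \<Rightarrow> bool list set" where
  "schema l D c = {g \<in> bstrings l. \<forall>j\<in>D. bit g j = c j}"

definition schema_partition :: "nat \<Rightarrow> nat set \<Rightarrow> bool list set set" where
  "schema_partition l D = {schema l D c | c. True}"

text \<open>Staircase descriptor: (h, oc, delta, l, L, V), matrices as 1-based functions.\<close>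
definition staircase_descriptor ::
  "nat \<Rightarrow> nat \<Rightarrow> real \<Rightarrow> nat \<Rightarrow> (nat \<Rightarrow> nat \<Rightarrow> nat) \<Rightarrow> (nat \<Rightarrow> nat \<Rightarrow> bool) \<Rightarrow> bool" where
  "staircase_descriptor h oc \<delta> l L V \<longleftrightarrow>
     0 < h \<and> 0 < oc \<and> h * oc \<le> l \<and> 0 < \<delta> \<and>
     (\<forall>i\<in>{1..h}. \<forall>j\<in>{1..oc}. L i j \<in> {1..l}) \<and>
     inj_on (\<lambda>(i, j). L i j) ({1..h} \<times> {1..oc})"

text \<open>The loop of the staircase function: n iterations remaining, current step i, current value x.\<close>
primrec stair_loop ::
  "nat \<Rightarrow> real \<Rightarrow> (nat \<Rightarrow> nat \<Rightarrow> nat) \<Rightarrow> (nat \<Rightarrow> nat \<Rightarrow> bool) \<Rightarrow> bool list \<Rightarrow> nat \<Rightarrow> nat \<Rightarrow> real \<Rightarrow> real" where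
  "stair_loop oc \<delta> L V g 0 i x = x"
| "stair_loop oc \<delta> L V g (Suc n) i x =
     (if Xi (row oc L i) g = row oc V i then stair_loop oc \<delta> L V g n (Suc i) (x + \<delta>)
      else x - \<delta> / (2 ^ oc - 1))"

definition staircase_value :: "nat \<Rightarrow> nat \<Rightarrow> real \<Rightarrow> (nat \<Rightarrow> nat \<Rightarrow> nat) \<Rightarrow> (nat \<Rightarrow> nat \<Rightarrow> bool) \<Rightarrow> bool list \<Rightarrow> real measure" where
  "staircase_value h oc \<delta> L V g =
     distr (density lborel std_normal_density) borel (\<lambda>x. stair_loop oc \<delta> L V g h 1 x)"

definition step :: "nat \<Rightarrow> nat \<Rightarrow> (nat \<Rightarrow> nat \<Rightarrow> nat) \<Rightarrow> (nat \<Rightarrow> nat \<Rightarrow> bool) \<Rightarrow> nat \<Rightarrow> bool list set" where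
  "step l oc L V i = {g \<in> bstrings l. Xi (row oc L i) g = row oc V i}"

definition stage :: "nat \<Rightarrow> nat \<Rightarrow> (nat \<Rightarrow> nat \<Rightarrow> nat) \<Rightarrow> (nat \<Rightarrow> nat \<Rightarrow> bool) \<Rightarrow> nat \<Rightarrow> bool list set" where
  "stage l oc L V i = {g \<in> bstrings l. \<forall>k\<in>{1..i}. g \<in> step l oc L V k}"

definition F_dist :: "nat \<Rightarrow> nat \<Rightarrow> real \<Rightarrow> (nat \<Rightarrow> nat \<Rightarrow> nat) \<Rightarrow> (nat \<Rightarrow> nat \<Rightarrow> bool) \<Rightarrow> bool list set \<Rightarrow> real measure" where
  "F_dist h oc \<delta> L V \<gamma> = measure_pmf (pmf_of_set \<gamma>) \<bind> staircase_value h oc \<delta> L V"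

definition mean_F :: "nat \<Rightarrow> nat \<Rightarrow> real \<Rightarrow> (nat \<Rightarrow> nat \<Rightarrow> nat) \<Rightarrow> (nat \<Rightarrow> nat \<Rightarrow> bool) \<Rightarrow> bool list set \<Rightarrow> real" where
  "mean_F h oc \<delta> L V \<gamma> = (\<integral>x. x \<partial>F_dist h oc \<delta> L V \<gamma>)"

definition fitness_signal :: "nat \<Rightarrow> nat \<Rightarrow> real \<Rightarrow> nat \<Rightarrow> (nat \<Rightarrow> nat \<Rightarrow> nat) \<Rightarrow> (nat \<Rightarrow> nat \<Rightarrow> bool) \<Rightarrow> bool list set \<Rightarrow> real" where
  "fitness_signal h oc \<delta> l L V \<gamma> = mean_F h oc \<delta> L V \<gamma> - mean_F h oc \<delta> L V (bstrings l)"

end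

theory Submission
  imports Defs
begin

(* The value of the staircase function at g is x + v(g), where x ~ N(0,1) is the
   noise and v(g) is the deterministic outcome of the loop started at 0 (staircase_shift).
   Hence E[F_gamma] is the average of v over gamma (mean_F_eq_average); the probabilistic
   ingredient is an integral formula for a finite mixture of shifted standard normals.
   The stage j is the schema fixing the positions of rows 1..j of L to the bits of V; it has
   2^(l - oc*j) elements, and on stage j minus stage j+1 the function v takes the value
   j*delta - delta/(2^oc - 1).  A downward induction over j gives
   sum of v over stage j = j*delta*2^(l - oc*j)  (sum_staircase_shift_stage);
   for j = 0 this says that the mean of f over all strings is 0.
   Since the schemata of any schema partition have equal size and cover all strings, their
   fitness signals sum to 0, while the signal of stage i is i*delta.  The theorem follows by
   removing stage i from the sum. *)

lemma has_bochner_integral_bind_finite_pmf_nonneg: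
  fixes f :: "'b \<Rightarrow> real"
  assumes fin: "finite (set_pmf p)"
    and N: "N \<in> measurable (measure_pmf p) (subprob_algebra K)"
    and f: "f \<in> borel_measurable K" and nonneg: "\<And>y. 0 \<le> f y"
    and int: "\<And>x. x \<in> set_pmf p \<Longrightarrow> integrable (N x) f"
  shows "has_bochner_integral (measure_pmf p \<bind> N) f (\<Sum>x\<in>set_pmf p. pmf p x * integral\<^sup>L (N x) f)"
proof (rule has_bochner_integral_nn_integral)
  have sets_eq: "sets (measure_pmf p \<bind> N) = sets K"
    by (rule sets_bind_measurable[OF N]) simp
  show "f \<in> borel_measurable (measure_pmf p \<bind> N)"
    using f by (simp add: measurable_cong_sets[OF sets_eq refl])
  show "AE y in measure_pmf p \<bind> N. 0 \<le> f y" by (simp add: nonneg)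
  show "0 \<le> (\<Sum>x\<in>set_pmf p. pmf p x * integral\<^sup>L (N x) f)"
    by (intro sum_nonneg mult_nonneg_nonneg integral_nonneg_AE) (auto simp: nonneg)
  have "(\<integral>\<^sup>+y. ennreal (f y) \<partial>(measure_pmf p \<bind> N)) = (\<integral>\<^sup>+x. \<integral>\<^sup>+y. ennreal (f y) \<partial>N x \<partial>measure_pmf p)"
    by (rule nn_integral_bind[OF _ N]) (use f in measurable)
  also have "\<dots> = (\<Sum>x\<in>set_pmf p. (\<integral>\<^sup>+y. ennreal (f y) \<partial>N x) * pmf p x)"
    by (rule nn_integral_measure_pmf_finite[OF fin]) simp
  also have "\<dots> = (\<Sum>x\<in>set_pmf p. ennreal (pmf p x * integral\<^sup>L (N x) f))"
    by (intro sum.cong refl)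
       (simp add: nn_integral_eq_integral[OF int] nonneg ennreal_mult' integral_nonneg_AE mult.commute)
  also have "\<dots> = ennreal (\<Sum>x\<in>set_pmf p. pmf p x * integral\<^sup>L (N x) f)"
    by (intro sum_ennreal mult_nonneg_nonneg integral_nonneg_AE) (auto simp: nonneg)
  finally show "(\<integral>\<^sup>+y. ennreal (f y) \<partial>(measure_pmf p \<bind> N)) = ennreal (\<Sum>x\<in>set_pmf p. pmf p x * integral\<^sup>L (N x) f)" .
qed

lemma integral_bind_finite_pmf:
  fixes f :: "'b \<Rightarrow> real"
  assumes fin: "finite (set_pmf p)"
    and N: "N \<in> measurable (measure_pmf p) (subprob_algebra K)"
    and f: "f \<in> borel_measurable K"
    and int: "\<And>x. x \<in> set_pmf p \<Longrightarrow> integrable (N x) f"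
  shows "integral\<^sup>L (measure_pmf p \<bind> N) f = (\<Sum>x\<in>set_pmf p. pmf p x * integral\<^sup>L (N x) f)"
proof -
  let ?pos = "\<lambda>y. max (f y) 0" and ?neg = "\<lambda>y. max (- f y) 0"
  have int_parts: "integrable (N x) ?pos" "integrable (N x) ?neg" if "x \<in> set_pmf p" for x
    using int[OF that] by (auto intro: integrable_max integrable_minus)
  have split: "(\<lambda>y. ?pos y - ?neg y) = f" by (auto simp: max_def)
  have "has_bochner_integral (measure_pmf p \<bind> N) (\<lambda>y. ?pos y - ?neg y)
     ((\<Sum>x\<in>set_pmf p. pmf p x * integral\<^sup>L (N x) ?pos) - (\<Sum>x\<in>set_pmf p. pmf p x * integral\<^sup>L (N x) ?neg))"
    using int_parts f
    by (intro has_bochner_integral_diff has_bochner_integral_bind_finite_pmf_nonneg[OF fin N]) auto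
  moreover have "integral\<^sup>L (N x) ?pos - integral\<^sup>L (N x) ?neg = integral\<^sup>L (N x) f"
    if "x \<in> set_pmf p" for x
    using Bochner_Integration.integral_diff[OF int_parts[OF that]] split by simp
  ultimately show ?thesis unfolding split
    by (simp add: has_bochner_integral_iff sum_subtractf[symmetric] right_diff_distrib[symmetric] cong: sum.cong)
qed

abbreviation std_normal :: "real measure" where
  "std_normal \<equiv> density lborel std_normal_density"

lemma prob_space_std_normal: "prob_space std_normal"
  by (rule prob_space_normal_density) simp

lemma has_bochner_integral_std_normal_id: "has_bochner_integral std_normal (\<lambda>x. x) 0"
proof -
  have "has_bochner_integral lborel (\<lambda>x. std_normal_density x * x) 0"
    using integrable_std_normal_moment[of 1] integral_std_normal_moment_odd[of 0]
    by (simp add: has_bochner_integral_iff)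
  thus ?thesis by (simp add: has_bochner_integral_density normal_density_nonneg)
qed

lemma has_bochner_integral_std_normal_shift:
  "has_bochner_integral (distr std_normal borel (\<lambda>x. x + c)) (\<lambda>y. y) c"
proof -
  interpret prob_space std_normal by (rule prob_space_std_normal)
  have "has_bochner_integral std_normal (\<lambda>x. c) c"
    using prob_space by (simp add: has_bochner_integral_iff)
  with has_bochner_integral_std_normal_id
  have "has_bochner_integral std_normal (\<lambda>x. x + c) (0 + c)"
    by (rule has_bochner_integral_add)
  thus ?thesis by (simp add: has_bochner_integral_distr)
qed

definition staircase_shift ::
  "nat \<Rightarrow> nat \<Rightarrow> real \<Rightarrow> (nat \<Rightarrow> nat \<Rightarrow> nat) \<Rightarrow> (nat \<Rightarrow> nat \<Rightarrow> bool) \<Rightarrow> bool list \<Rightarrow> real" where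
  "staircase_shift h oc \<delta> L V g = stair_loop oc \<delta> L V g h 1 0"

(* The loop only adds constants to x, so its result is x plus the noise-free value. *)
lemma stair_loop_translate: "stair_loop oc \<delta> L V g n i x = x + stair_loop oc \<delta> L V g n i 0"
proof (induction n arbitrary: i x)
  case 0 show ?case by simp
next
  case (Suc n)
  show ?case using Suc.IH[of "Suc i" "x + \<delta>"] Suc.IH[of "Suc i" "\<delta>"] by simp
qed

lemma staircase_value_eq_shifted_normal:
  "staircase_value h oc \<delta> L V g = distr std_normal borel (\<lambda>x. x + staircase_shift h oc \<delta> L V g)"
  unfolding staircase_value_def staircase_shift_def
  by (rule arg_cong[where f="distr std_normal borel"]) (rule ext, rule stair_loop_translate)

lemma mean_F_eq_average:
  assumes "finite \<gamma>" "\<gamma> \<noteq> {}"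
  shows "mean_F h oc \<delta> L V \<gamma> = (\<Sum>g\<in>\<gamma>. staircase_shift h oc \<delta> L V g) / card \<gamma>"
proof -
  let ?c = "staircase_shift h oc \<delta> L V"
  have "prob_space (distr std_normal borel (\<lambda>x. x + ?c g))" for g
    by (rule prob_space.prob_space_distr[OF prob_space_std_normal]) simp
  hence kernel: "(\<lambda>g. distr std_normal borel (\<lambda>x. x + ?c g))
      \<in> measurable (measure_pmf (pmf_of_set \<gamma>)) (subprob_algebra borel)"
    by (auto simp: space_subprob_algebra prob_space_imp_subprob_space)
  have "mean_F h oc \<delta> L V \<gamma> = (\<Sum>g\<in>\<gamma>. pmf (pmf_of_set \<gamma>) g * ?c g)"
    unfolding mean_F_def F_dist_def staircase_value_eq_shifted_normal
    using assms has_bochner_integral_std_normal_shift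
    by (subst integral_bind_finite_pmf[OF _ kernel]) (auto simp: has_bochner_integral_iff)
  also have "\<dots> = (\<Sum>g\<in>\<gamma>. ?c g) / card \<gamma>"
    using assms by (simp add: sum_divide_distrib)
  finally show ?thesis .
qed

lemma finite_bstrings: "finite (bstrings l)"
  using finite_lists_length_eq[of "UNIV :: bool set" l] by (simp add: bstrings_def)

(* A schema with fixed positions D is in bijection with the assignments of the free
   positions, hence has 2^(l - |D|) elements. *)
lemma card_schema:
  assumes D: "D \<subseteq> {1..l}"
  shows "card (schema l D c) = 2 ^ (l - card D)"
proof -
  let ?A = "{1..l} - D"
  let ?free_bits = "\<lambda>g. restrict (bit g) ?A"
  have inj: "inj_on ?free_bits (schema l D c)"
  proof (rule inj_onI)
    fix g1 g2 assume g1: "g1 \<in> schema l D c" and g2: "g2 \<in> schema l D c"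
      and eq: "?free_bits g1 = ?free_bits g2"
    have len: "length g1 = l" "length g2 = l" using g1 g2 by (auto simp: schema_def bstrings_def)
    have "bit g1 j = bit g2 j" if "j \<in> {1..l}" for j
      using that g1 g2 fun_cong[OF eq, of j] by (cases "j \<in> D") (auto simp: schema_def)
    hence "g1 ! k = g2 ! k" if "k < l" for k
      using that by (metis bit_def atLeastAtMost_iff diff_Suc_1 le_add1 Suc_leI plus_1_eq_Suc zero_less_Suc)
    thus "g1 = g2" using len by (intro nth_equalityI) auto
  qed
  have img: "?free_bits ` schema l D c = ?A \<rightarrow>\<^sub>E (UNIV :: bool set)"
  proof
    show "?free_bits ` schema l D c \<subseteq> ?A \<rightarrow>\<^sub>E UNIV" by auto
    show "?A \<rightarrow>\<^sub>E UNIV \<subseteq> ?free_bits ` schema l D c"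
    proof
      fix f assume f: "f \<in> ?A \<rightarrow>\<^sub>E (UNIV :: bool set)"
      define g where "g = map (\<lambda>j. if j \<in> D then c j else f j) [1..<l+1]"
      have bit_g: "bit g j = (if j \<in> D then c j else f j)" if "j \<in> {1..l}" for j
      proof -
        have "j - 1 < l" using that by auto
        thus ?thesis using that by (simp add: g_def bit_def del: upt_Suc)
      qed
      have "length g = l" by (simp add: g_def)
      hence "g \<in> schema l D c" using D bit_g unfolding schema_def bstrings_def by force
      moreover have "?free_bits g = f"
      proof
        fix j show "?free_bits g j = f j"
          using f bit_g[of j] by (cases "j \<in> ?A") (auto simp: PiE_def extensional_def)
      qed
      ultimately show "f \<in> ?free_bits ` schema l D c" by blast
    qed
  qed
  have "card (schema l D c) = card (?A \<rightarrow>\<^sub>E (UNIV :: bool set))"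
    using card_image[OF inj] img by simp
  also have "\<dots> = 2 ^ (l - card D)"
    using D finite_subset[OF D] by (simp add: card_PiE card_Diff_subset)
  finally show ?thesis .
qed

lemma schema_partition_finite: "finite (schema_partition l D)"
proof -
  have "schema_partition l D \<subseteq> Pow (bstrings l)"
    by (auto simp: schema_partition_def schema_def)
  thus ?thesis using finite_bstrings by (meson finite_Pow_iff finite_subset)
qed

lemma schema_partition_covers: "\<Union> (schema_partition l D) = bstrings l"
proof
  show "\<Union> (schema_partition l D) \<subseteq> bstrings l"
    by (auto simp: schema_partition_def schema_def)
  show "bstrings l \<subseteq> \<Union> (schema_partition l D)"
  proof
    fix g assume "g \<in> bstrings l"
    hence "g \<in> schema l D (bit g)" by (simp add: schema_def)
    thus "g \<in> \<Union> (schema_partition l D)" by (auto simp: schema_partition_def)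
  qed
qed

lemma schema_partition_disjoint:
  assumes "A \<in> schema_partition l D" "B \<in> schema_partition l D" "A \<noteq> B"
  shows "A \<inter> B = {}"
proof (rule ccontr)
  obtain cA cB where A: "A = schema l D cA" and B: "B = schema l D cB"
    using assms(1,2) by (auto simp: schema_partition_def)
  assume "A \<inter> B \<noteq> {}"
  then obtain g where "g \<in> A" "g \<in> B" by blast
  hence "\<forall>j\<in>D. cA j = cB j" using A B by (auto simp: schema_def)
  hence "A = B" unfolding A B schema_def by auto
  with assms(3) show False ..
qed

lemma sum_block_averages:
  fixes v :: "'a \<Rightarrow> real"
  assumes "\<And>\<xi>. \<xi> \<in> P \<Longrightarrow> finite \<xi>"
    and "\<And>A B. A \<in> P \<Longrightarrow> B \<in> P \<Longrightarrow> A \<noteq> B \<Longrightarrow> A \<inter> B = {}"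
  shows "(\<Sum>\<xi>\<in>P. (\<Sum>g\<in>\<xi>. v g) / N) = (\<Sum>g\<in>\<Union>P. v g) / N"
proof -
  have "(\<Sum>g\<in>\<Union>P. v g) = (\<Sum>\<xi>\<in>P. \<Sum>g\<in>\<xi>. v g)"
    using assms by (subst sum.Union_disjoint) auto
  thus ?thesis by (simp add: sum_divide_distrib)
qed

lemma card_schema_partition_block:
  assumes "D \<subseteq> {1..l}" "\<xi> \<in> schema_partition l D"
  shows "card \<xi> = 2 ^ (l - card D)"
  using assms card_schema by (auto simp: schema_partition_def)

definition stage_positions :: "nat \<Rightarrow> (nat \<Rightarrow> nat \<Rightarrow> nat) \<Rightarrow> nat \<Rightarrow> nat set" where
  "stage_positions oc L j = (\<lambda>(a, b). L a b) ` ({1..j} \<times> {1..oc})"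

(* The bit that V prescribes at a position of L (well-defined since L is injective). *)
definition target_bits ::
  "nat \<Rightarrow> nat \<Rightarrow> (nat \<Rightarrow> nat \<Rightarrow> nat) \<Rightarrow> (nat \<Rightarrow> nat \<Rightarrow> bool) \<Rightarrow> nat \<Rightarrow> bool" where
  "target_bits h oc L V p = (case inv_into ({1..h} \<times> {1..oc}) (\<lambda>(a, b). L a b) p of (a, b) \<Rightarrow> V a b)"

lemma
  assumes "staircase_descriptor h oc \<delta> l L V" "j \<le> h"
  shows stage_positions_subset: "stage_positions oc L j \<subseteq> {1..l}"
    and card_stage_positions: "card (stage_positions oc L j) = oc * j"
proof -
  have inj: "inj_on (\<lambda>(a, b). L a b) ({1..h} \<times> {1..oc})"
    and range: "\<forall>a\<in>{1..h}. \<forall>b\<in>{1..oc}. L a b \<in> {1..l}"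
    using assms(1) by (auto simp: staircase_descriptor_def)
  have sub: "{1..j} \<times> {1..oc} \<subseteq> {1..h} \<times> {1..oc}" using assms(2) by auto
  show "stage_positions oc L j \<subseteq> {1..l}" using range sub unfolding stage_positions_def by fastforce
  have "card (stage_positions oc L j) = card ({1..j} \<times> {1..oc})"
    unfolding stage_positions_def by (rule card_image[OF inj_on_subset[OF inj sub]])
  thus "card (stage_positions oc L j) = oc * j" by (simp add: card_cartesian_product)
qed

lemma stage_eq_schema:
  assumes "staircase_descriptor h oc \<delta> l L V" "j \<le> h"
  shows "stage l oc L V j = schema l (stage_positions oc L j) (target_bits h oc L V)"
proof -
  have inj: "inj_on (\<lambda>(a, b). L a b) ({1..h} \<times> {1..oc})"
    using assms(1) by (auto simp: staircase_descriptor_def)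
  have target: "target_bits h oc L V (L a b) = V a b" if "a \<in> {1..j}" "b \<in> {1..oc}" for a b
    using that assms(2) inv_into_f_f[OF inj, of "(a, b)"] by (auto simp: target_bits_def)
  have "Xi (row oc L k) g = row oc V k \<longleftrightarrow> (\<forall>b\<in>{1..oc}. bit g (L k b) = V k b)" for k g
    by (auto simp: Xi_def row_def map_eq_conv)
  thus ?thesis using target
    by (auto simp: stage_def schema_def step_def stage_positions_def)
qed

lemma card_stage:
  assumes "staircase_descriptor h oc \<delta> l L V" "j \<le> h"
  shows "card (stage l oc L V j) = 2 ^ (l - oc * j)"
  using stage_eq_schema[OF assms] card_schema[OF stage_positions_subset[OF assms]]
    card_stage_positions[OF assms] by simp

lemma stair_loop_climb:
  assumes "\<forall>k\<in>{i..<i+m}. Xi (row oc L k) g = row oc V k" "m \<le> n"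
  shows "stair_loop oc \<delta> L V g n i x = stair_loop oc \<delta> L V g (n - m) (i + m) (x + real m * \<delta>)"
  using assms
proof (induction m arbitrary: i x n)
  case 0 show ?case by simp
next
  case (Suc m)
  then obtain n' where n: "n = Suc n'" by (cases n) auto
  have "Xi (row oc L i) g = row oc V i" using Suc.prems by auto
  hence "stair_loop oc \<delta> L V g n i x = stair_loop oc \<delta> L V g n' (Suc i) (x + \<delta>)" using n by simp
  also have "\<dots> = stair_loop oc \<delta> L V g (n' - m) (Suc i + m) (x + \<delta> + real m * \<delta>)"
    using Suc.prems n by (intro Suc.IH) auto
  finally show ?case using n by (simp add: algebra_simps)
qed

lemma staircase_shift_on_stage:
  assumes "g \<in> stage l oc L V j" "j \<le> h"
  shows "staircase_shift h oc \<delta> L V g = stair_loop oc \<delta> L V g (h - j) (Suc j) (real j * \<delta>)"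
proof -
  have "\<forall>k\<in>{1..<1+j}. Xi (row oc L k) g = row oc V k"
    using assms(1) by (auto simp: stage_def step_def)
  from stair_loop_climb[OF this assms(2)] show ?thesis by (simp add: staircase_shift_def)
qed

lemma staircase_shift_top:
  "g \<in> stage l oc L V h \<Longrightarrow> staircase_shift h oc \<delta> L V g = real h * \<delta>"
  using staircase_shift_on_stage[of g l oc L V h h] by simp

lemma staircase_shift_fall:
  assumes "g \<in> stage l oc L V j" "j < h" "g \<notin> stage l oc L V (Suc j)"
  shows "staircase_shift h oc \<delta> L V g = real j * \<delta> - \<delta> / (2 ^ oc - 1)"
proof -
  have "Xi (row oc L (Suc j)) g \<noteq> row oc V (Suc j)"
    using assms(1,3) by (auto simp: stage_def step_def le_Suc_eq)
  moreover obtain d where "h - j = Suc d" using assms(2) by (metis Suc_diff_Suc)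
  ultimately show ?thesis using staircase_shift_on_stage[OF assms(1), of h] assms(2) by simp
qed

lemma stage_exponent_split:
  assumes "staircase_descriptor h oc \<delta> l L V" "j < h"
  shows "l - oc * j = oc + (l - oc * Suc j)"
proof -
  have "oc * Suc j \<le> oc * h" using assms(2) by (intro mult_le_mono2) simp
  also have "\<dots> \<le> l" using assms(1) by (simp add: staircase_descriptor_def mult.commute)
  finally show ?thesis by simp
qed

lemma card_stage_layer:
  assumes desc: "staircase_descriptor h oc \<delta> l L V" and "j < h"
  shows "real (card (stage l oc L V j - stage l oc L V (Suc j))) = (2 ^ oc - 1) * 2 ^ (l - oc * Suc j)"
proof -
  have sub: "stage l oc L V (Suc j) \<subseteq> stage l oc L V j" by (auto simp: stage_def)
  have "card (stage l oc L V j - stage l oc L V (Suc j)) = 2 ^ (l - oc * j) - 2 ^ (l - oc * Suc j)"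
    using card_Diff_subset[OF finite_subset[OF sub] sub] finite_bstrings
      card_stage[OF desc] assms(2) by (simp add: stage_def)
  thus ?thesis unfolding stage_exponent_split[OF assms] by (simp add: power_add of_nat_diff algebra_simps)
qed

(* By downward induction
   on j, splitting stage j into stage j+1 and the layer where the loop falls; the penalty
   -delta/(2^oc - 1) exactly cancels the gain of the strings of stage j+1. *)
lemma sum_staircase_shift_stage:
  assumes desc: "staircase_descriptor h oc \<delta> l L V" and "j \<le> h"
  shows "(\<Sum>g\<in>stage l oc L V j. staircase_shift h oc \<delta> L V g) = real j * \<delta> * 2 ^ (l - oc * j)"
  using assms(2)
proof (induction j rule: inc_induct)
  case base
  have "(\<Sum>g\<in>stage l oc L V h. staircase_shift h oc \<delta> L V g) = (\<Sum>g\<in>stage l oc L V h. real h * \<delta>)"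
    using staircase_shift_top by (intro sum.cong) auto
  thus ?case using card_stage[OF desc order_refl] by simp
next
  case (step j)
  let ?v = "staircase_shift h oc \<delta> L V" and ?S = "stage l oc L V"
  let ?E = "(2::real) ^ (l - oc * Suc j)" and ?P = "(2::real) ^ oc"
  have sub: "?S (Suc j) \<subseteq> ?S j" by (auto simp: stage_def)
  have fin: "finite (?S j)" using finite_bstrings by (rule finite_subset[rotated]) (auto simp: stage_def)
  have P: "?P \<ge> 2" using desc by (auto simp: staircase_descriptor_def intro: self_le_power)
  have "sum ?v (?S j) = sum ?v (?S j - ?S (Suc j)) + sum ?v (?S (Suc j))"
    by (rule sum.subset_diff[OF sub fin])
  also have "sum ?v (?S j - ?S (Suc j)) = (\<Sum>g\<in>?S j - ?S (Suc j). real j * \<delta> - \<delta> / (?P - 1))"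
    using staircase_shift_fall[OF _ step.hyps(2)] by (intro sum.cong) auto
  also have "\<dots> = (?P - 1) * ?E * (real j * \<delta> - \<delta> / (?P - 1))"
    using card_stage_layer[OF desc step.hyps(2)] by simp
  also have "sum ?v (?S (Suc j)) = real (Suc j) * \<delta> * ?E" by (rule step.IH)
  also have "(?P - 1) * ?E * (real j * \<delta> - \<delta> / (?P - 1)) + real (Suc j) * \<delta> * ?E
      = real j * \<delta> * (?P * ?E)" using P by (simp add: field_simps)
  also have "?P * ?E = 2 ^ (l - oc * j)"
    unfolding stage_exponent_split[OF desc step.hyps(2)] by (simp add: power_add)
  finally show ?case .
qed

(* Stage 0 is the whole space, so f has mean 0 over all strings. *)
lemma sum_staircase_shift_all_strings:
  assumes "staircase_descriptor h oc \<delta> l L V"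
  shows "(\<Sum>g\<in>bstrings l. staircase_shift h oc \<delta> L V g) = 0"
  using sum_staircase_shift_stage[OF assms, of 0] by (simp add: stage_def)

lemma mean_F_all_strings:
  assumes "staircase_descriptor h oc \<delta> l L V"
  shows "mean_F h oc \<delta> L V (bstrings l) = 0"
proof -
  have "bstrings l \<noteq> {}" using card_stage[OF assms, of 0] by (auto simp: stage_def)
  thus ?thesis using finite_bstrings sum_staircase_shift_all_strings[OF assms]
    by (simp add: mean_F_eq_average)
qed

lemma sum_fitness_signal_schema_partition:
  assumes desc: "staircase_descriptor h oc \<delta> l L V" and D: "D \<subseteq> {1..l}"
  shows "(\<Sum>\<xi>\<in>schema_partition l D. fitness_signal h oc \<delta> l L V \<xi>) = 0"
proof -
  let ?v = "staircase_shift h oc \<delta> L V" and ?N = "(2::nat) ^ (l - card D)"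
  have block: "finite \<xi>" "\<xi> \<noteq> {}" "card \<xi> = ?N" if "\<xi> \<in> schema_partition l D" for \<xi>
    using card_schema_partition_block[OF D that] by (auto intro: card_ge_0_finite)
  have "(\<Sum>\<xi>\<in>schema_partition l D. fitness_signal h oc \<delta> l L V \<xi>)
      = (\<Sum>\<xi>\<in>schema_partition l D. (\<Sum>g\<in>\<xi>. ?v g) / ?N)"
    using block by (intro sum.cong) (simp_all add: fitness_signal_def mean_F_all_strings[OF desc] mean_F_eq_average)
  also have "\<dots> = (\<Sum>g\<in>bstrings l. ?v g) / ?N"
    using block schema_partition_disjoint sum_block_averages[of "schema_partition l D"]
    by (simp add: schema_partition_covers)
  finally show ?thesis by (simp add: sum_staircase_shift_all_strings[OF desc])
qed

lemma fitness_signal_stage: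
  assumes desc: "staircase_descriptor h oc \<delta> l L V" and "i \<le> h"
  shows "fitness_signal h oc \<delta> l L V (stage l oc L V i) = real i * \<delta>"
proof -
  have "stage l oc L V i \<noteq> {}" "finite (stage l oc L V i)"
    using card_stage[OF assms] by (auto intro: card_ge_0_finite)
  thus ?thesis using sum_staircase_shift_stage[OF assms] card_stage[OF assms]
    by (simp add: fitness_signal_def mean_F_all_strings[OF desc] mean_F_eq_average)
qed

lemma sum_fitness_signal_other_schemata:
  assumes desc: "staircase_descriptor h oc \<delta> l L V" and i: "i \<le> h"
  shows "(\<Sum>\<xi>\<in>schema_partition l (stage_positions oc L i) - {stage l oc L V i}.
            fitness_signal h oc \<delta> l L V \<xi>) = - real i * \<delta>"
proof -
  let ?P = "schema_partition l (stage_positions oc L i)" and ?S = "fitness_signal h oc \<delta> l L V"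
  have stage_block: "stage l oc L V i \<in> ?P"
    using stage_eq_schema[OF desc i] by (auto simp: schema_partition_def)
  have "(\<Sum>\<xi>\<in>?P - {stage l oc L V i}. ?S \<xi>) = (\<Sum>\<xi>\<in>?P. ?S \<xi>) - ?S (stage l oc L V i)"
    using sum.remove[OF schema_partition_finite stage_block, of ?S] by linarith
  also have "\<dots> = - real i * \<delta>"
    using sum_fitness_signal_schema_partition[OF desc stage_positions_subset[OF desc i]]
      fitness_signal_stage[OF desc i] by simp
  finally show ?thesis .
qed

theorem mainTheorem4:
  fixes h oc l i :: nat and \<delta> :: real
    and L :: "nat \<Rightarrow> nat \<Rightarrow> nat" and V :: "nat \<Rightarrow> nat \<Rightarrow> bool"
  assumes "staircase_descriptor h oc \<delta> l L V"
    and "i \<in> {1..h}"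
  shows "(\<Sum>\<xi> \<in> schema_partition l {L a b | a b. a \<in> {1..i} \<and> b \<in> {1..oc}} - {stage l oc L V i}.
            fitness_signal h oc \<delta> l L V \<xi>) = - real i * \<delta>"
proof -
  have "{L a b | a b. a \<in> {1..i} \<and> b \<in> {1..oc}} = stage_positions oc L i"
    by (auto simp: stage_positions_def) blast
  with sum_fitness_signal_other_schemata[OF assms(1)] assms(2) show ?thesis by simp
qed

end
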